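(* Let $(X,d)$ be a complete metric space and $H(X)$ the space of nonempty compact subsets of $X$ with the Hausdorff metric $h$. Fix $n\in\mathbb{N}$ and for each $i\in\mathbb{N}$ let $F_i=\{X;f_{1,i},\dots,f_{n,i}\}$ with continuous maps $f_{r,i}:X\to X$, each a $\phi$-contraction with comparison function $\phi_{r,i}$; let $F_i(A)=\bigcup_{r=1}^n f_{r,i}(A)$ for $A\in H(X)$ and $\phi_i=\max_{r}\phi_{r,i}$. Suppose there is $A_1\in H(X)$ with $\sup_{i\in\mathbb{N}}h(F_i(A_1),A_1)<\infty$, and that $$\sum_{k=1}^\infty\phi_1\circ\phi_2\circ\cdots\circ\phi_k(t)<\infty\quad\text{for every }t>0.$$ Then there is a unique set $A^*\in H(X)$ such that for every $A\in H(X)$ the backward trajectory $\Psi_k(A)=F_1\circ F_2\circ\cdots\circ F_k(A)$ converges to $A^*$ in $(H(X),h)$.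
   Context: A comparison function is a non-decreasing map $\phi:[0,\infty)\to[0,\infty)$ such that $\phi^p(t)\to0$ as $p\to\infty$ for every $t\ge0$ ($\phi^p$ the $p$-fold composition). A map $f:X\to X$ is a $\phi$-contraction if $d(f(x),f(y))\le\phi(d(x,y))$ for all $x,y$. The Hausdorff metric is $h(A,B)=\max\{\max_{x\in A}\min_{y\in B}d(x,y),\max_{y\in B}\min_{x\in A}d(x,y)\}$. *)

theory Defs
  imports "HOL-Analysis.Analysis"
begin

definition comparison_function :: "(real \<Rightarrow> real) \<Rightarrow> bool" where
  "comparison_function \<phi> \<longleftrightarrow>
     (\<forall>t\<ge>0. \<phi> t \<ge> 0) \<and> mono_on {0..} \<phi> \<and>
     (\<forall>t\<ge>0. (\<lambda>p. (\<phi> ^^ p) t) \<longlonglongrightarrow> 0)"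

definition phi_contraction :: "(real \<Rightarrow> real) \<Rightarrow> ('a::metric_space \<Rightarrow> 'a) \<Rightarrow> bool" where
  "phi_contraction \<phi> f \<longleftrightarrow> (\<forall>x y. dist (f x) (f y) \<le> \<phi> (dist x y))"

fun lcomp :: "(nat \<Rightarrow> 'b \<Rightarrow> 'b) \<Rightarrow> nat \<Rightarrow> 'b \<Rightarrow> 'b" where
  "lcomp g 0 = id"
| "lcomp g (Suc k) = lcomp g k \<circ> g (Suc k)"

definition hutch :: "nat \<Rightarrow> (nat \<Rightarrow> nat \<Rightarrow> 'a \<Rightarrow> 'a) \<Rightarrow> nat \<Rightarrow> 'a set \<Rightarrow> 'a set" where
  "hutch n f i A = (\<Union>r\<in>{1..n}. f r i ` A)"

definition maxphi :: "nat \<Rightarrow> (nat \<Rightarrow> nat \<Rightarrow> real \<Rightarrow> real) \<Rightarrow> nat \<Rightarrow> real \<Rightarrow> real" where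
  "maxphi n \<phi> i t = Max ((\<lambda>r. \<phi> r i t) ` {1..n})"

text \<open>Hausdorff metric on nonempty compact sets: h(A,B) = max(max_{x\<in>A} min_{y\<in>B} d(x,y),
  max_{y\<in>B} min_{x\<in>A} d(x,y)); for nonempty compact A, B the max/min are attained, so
  they coincide with Sup/infdist used here.\<close>
definition hausdist :: "'a::metric_space set \<Rightarrow> 'a set \<Rightarrow> real" where
  "hausdist A B = max (SUP x\<in>A. infdist x B) (SUP y\<in>B. infdist y A)"

end

theory Submission
  imports Defs
begin

text \<open>
  Each \<open>F\<^sub>i\<close> is a \<open>\<phi>\<^sub>i\<close>-contraction of the space of nonempty compact sets with the
  Hausdorff metric, so the backward composition \<open>\<Psi>\<^sub>k = F\<^sub>1 \<circ> \<dots> \<circ> F\<^sub>k\<close> is a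
  \<open>(\<phi>\<^sub>1 \<circ> \<dots> \<circ> \<phi>\<^sub>k)\<close>-contraction. Hence
  \<open>h(\<Psi>\<^sub>k A\<^sub>1, \<Psi>\<^sub>k\<^sub>+\<^sub>1 A\<^sub>1) \<le> (\<phi>\<^sub>1 \<circ> \<dots> \<circ> \<phi>\<^sub>k)(M)\<close>, where \<open>M\<close> bounds
  \<open>h(F\<^sub>i A\<^sub>1, A\<^sub>1)\<close>, and the summability hypothesis makes \<open>\<Psi>\<^sub>k A\<^sub>1\<close> converge to a
  nonempty compact set \<open>A\<^sup>*\<close> (realised as the closed upper limit of the sequence; this is
  completeness of the Hausdorff metric). For any other \<open>A\<close>,
  \<open>h(\<Psi>\<^sub>k A, \<Psi>\<^sub>k A\<^sub>1) \<le> (\<phi>\<^sub>1 \<circ> \<dots> \<circ> \<phi>\<^sub>k)(h(A, A\<^sub>1))\<close>, which by monotonicity is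
  dominated by the terms of a convergent series and so tends to \<open>0\<close>. Uniqueness of limits
  gives uniqueness of \<open>A\<^sup>*\<close>.
\<close>

subsection \<open>The Hausdorff distance\<close>

lemma infdist_attains_inf_compact:
  fixes X :: "'a::metric_space set"
  assumes "compact X" "X \<noteq> {}"
  obtains x where "x \<in> X" "infdist y X = dist y x"
proof -
  have "continuous_on X (dist y)"
    by (intro continuous_intros)
  then obtain x where x: "x \<in> X" "\<And>z. z \<in> X \<Longrightarrow> dist y x \<le> dist y z"
    using continuous_attains_inf[OF assms] by blast
  then have "infdist y X = dist y x"
    by (metis antisym assms(2) cINF_greatest infdist_def infdist_le)
  with x(1) show ?thesis using that by blast
qed

lemma hausdist_sym: "hausdist A B = hausdist B A"
  unfolding hausdist_def by (simp add: max.commute)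

lemma hausdist_le:
  assumes "A \<noteq> {}" "B \<noteq> {}"
    and "\<And>x. x \<in> A \<Longrightarrow> infdist x B \<le> e" "\<And>y. y \<in> B \<Longrightarrow> infdist y A \<le> e"
  shows "hausdist A B \<le> e"
  unfolding hausdist_def using assms by (intro max.boundedI cSUP_least) auto

lemma infdist_le_hausdist:
  assumes "bounded A" "x \<in> A"
  shows "infdist x B \<le> hausdist A B"
proof -
  obtain c r where r: "\<And>z. z \<in> A \<Longrightarrow> dist c z \<le> r"
    using assms(1) unfolding bounded_def by blast
  have "infdist z B \<le> infdist c B + r" if "z \<in> A" for z
    using infdist_triangle[of z B c] r[OF that] by (simp add: dist_commute)
  then have "bdd_above ((\<lambda>z. infdist z B) ` A)"
    by (rule bdd_aboveI2)
  then have "infdist x B \<le> (SUP z\<in>A. infdist z B)"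
    using assms(2) by (rule cSUP_upper2) simp
  then show ?thesis
    unfolding hausdist_def by simp
qed

lemma hausdist_nonneg:
  assumes "bounded A" "A \<noteq> {}"
  shows "0 \<le> hausdist A B"
  using assms infdist_le_hausdist infdist_nonneg by (metis all_not_in_conv order_trans)

lemma hausdist_self [simp]: "A \<noteq> {} \<Longrightarrow> hausdist A A = 0"
  unfolding hausdist_def by simp

lemma exists_dist_le_hausdist:
  assumes "bounded A" "x \<in> A" "compact B" "B \<noteq> {}"
  obtains y where "y \<in> B" "dist x y \<le> hausdist A B"
  using infdist_attains_inf_compact[OF assms(3,4)] infdist_le_hausdist[OF assms(1,2)] by metis

lemma hausdist_triangle:
  fixes A :: "'a::metric_space set"
  assumes "compact A" "A \<noteq> {}" "compact B" "B \<noteq> {}" "compact C" "C \<noteq> {}"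
  shows "hausdist A C \<le> hausdist A B + hausdist B C"
proof (rule hausdist_le)
  have through: "infdist x Z \<le> hausdist X Y + hausdist Y Z"
    if X: "compact X" "x \<in> X" and Y: "compact Y" "Y \<noteq> {}" and "compact Z" for X Y Z :: "'a set" and x
  proof -
    obtain y where "y \<in> Y" "dist x y \<le> hausdist X Y"
      using exists_dist_le_hausdist[OF compact_imp_bounded[OF X(1)] X(2) Y] by metis
    moreover have "infdist y Z \<le> hausdist Y Z"
      using \<open>y \<in> Y\<close> Y by (simp add: compact_imp_bounded infdist_le_hausdist)
    ultimately show ?thesis
      using infdist_triangle[of x Z y] by linarith
  qed
  show "infdist x C \<le> hausdist A B + hausdist B C" if "x \<in> A" for x
    using assms that through by blast
  show "infdist z A \<le> hausdist A B + hausdist B C" if "z \<in> C" for z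
    using assms that through hausdist_sym by (metis add.commute)
qed (use assms in auto)

lemma hausdist_eq_0_iff:
  fixes A :: "'a::metric_space set"
  assumes "compact A" "A \<noteq> {}" "compact B" "B \<noteq> {}"
  shows "hausdist A B = 0 \<longleftrightarrow> A = B"
proof
  assume h: "hausdist A B = 0"
  have "X \<subseteq> Y" if "compact X" "compact Y" "Y \<noteq> {}" "hausdist X Y = 0" for X Y :: "'a set"
  proof
    fix x assume "x \<in> X"
    then have "infdist x Y = 0"
      using infdist_le_hausdist[of X x Y] infdist_nonneg[of x Y] that compact_imp_bounded by force
    then show "x \<in> Y"
      using in_closed_iff_infdist_zero that compact_imp_closed by blast
  qed
  then show "A = B"
    using assms h hausdist_sym by (metis subset_antisym)
qed (use assms in simp)

lemma hausdist_tendsto_0_trans: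
  assumes "\<And>k. compact (A k)" "\<And>k. A k \<noteq> {}" "\<And>k. compact (B k)" "\<And>k. B k \<noteq> {}"
    and "compact S" "S \<noteq> {}"
    and "(\<lambda>k. hausdist (A k) (B k)) \<longlonglongrightarrow> 0" "(\<lambda>k. hausdist (B k) S) \<longlonglongrightarrow> 0"
  shows "(\<lambda>k. hausdist (A k) S) \<longlonglongrightarrow> 0"
proof (rule tendsto_sandwich)
  show "\<forall>\<^sub>F k in sequentially. 0 \<le> hausdist (A k) S"
    using assms(1,2) by (simp add: compact_imp_bounded hausdist_nonneg)
  show "\<forall>\<^sub>F k in sequentially. hausdist (A k) S \<le> hausdist (A k) (B k) + hausdist (B k) S"
    using assms(1-6) by (simp add: hausdist_triangle)
  show "(\<lambda>k. hausdist (A k) (B k) + hausdist (B k) S) \<longlonglongrightarrow> 0"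
    using tendsto_add[OF assms(7,8)] by simp
qed simp

lemma hausdist_limit_unique:
  assumes "\<And>k. compact (B k)" "\<And>k. B k \<noteq> {}"
    and "compact S" "S \<noteq> {}" "compact T" "T \<noteq> {}"
    and "(\<lambda>k. hausdist (B k) S) \<longlonglongrightarrow> 0" "(\<lambda>k. hausdist (B k) T) \<longlonglongrightarrow> 0"
  shows "S = T"
proof -
  have "(\<lambda>k. hausdist S T) \<longlonglongrightarrow> 0"
    by (rule hausdist_tendsto_0_trans[where B = B])
       (use assms hausdist_sym[of S] in auto)
  then show ?thesis
    using assms(3-6) by (simp add: LIMSEQ_const_iff hausdist_eq_0_iff)
qed

subsection \<open>Completeness of the Hausdorff metric\<close>

lemma chain_le_suminf_tail:
  fixes d :: "nat \<Rightarrow> nat \<Rightarrow> real"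
  assumes nonneg: "\<And>i j. 0 \<le> d i j" and refl: "\<And>i. d i i = 0"
    and triangle: "\<And>i j k. d i k \<le> d i j + d j k"
    and step: "\<And>j. d j (Suc j) \<le> a j" and "summable a"
  shows "d m (m + p) \<le> (\<Sum>i. a (i + m))"
proof -
  have "d m (m + p) \<le> (\<Sum>i<p. a (i + m))"
  proof (induction p)
    case 0
    show ?case using refl by simp
  next
    case (Suc p)
    have "d m (m + Suc p) \<le> d m (m + p) + d (m + p) (Suc (m + p))"
      using triangle by simp
    also have "\<dots> \<le> (\<Sum>i<p. a (i + m)) + a (p + m)"
      using Suc.IH step[of "m + p"] by (simp add: add.commute)
    finally show ?case by simp
  qed
  also have "\<dots> \<le> (\<Sum>i. a (i + m))"
    using \<open>summable a\<close> nonneg step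
    by (intro sum_le_suminf summable_ignore_initial_segment) (auto intro: order_trans)
  finally show ?thesis .
qed

lemma Cauchy_if_summable_dist_Suc:
  fixes s :: "nat \<Rightarrow> 'a::metric_space"
  assumes step: "\<And>j. dist (s j) (s (Suc j)) \<le> a j" and "summable a"
  shows "Cauchy s"
  unfolding Cauchy_altdef
proof (intro allI impI)
  fix e :: real assume "e > 0"
  then obtain M where M: "\<And>m. m \<ge> M \<Longrightarrow> (\<Sum>i. a (i + m)) < e"
    using order_tendstoD(2)[OF suminf_exist_split2[OF \<open>summable a\<close>]]
    unfolding eventually_sequentially by blast
  have "dist (s m) (s (m + p)) \<le> (\<Sum>i. a (i + m))" for m p
    by (rule chain_le_suminf_tail[OF zero_le_dist dist_self dist_triangle step \<open>summable a\<close>])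
  then have "dist (s m) (s n) < e" if "m \<ge> M" "n > m" for m n
    using M[OF \<open>m \<ge> M\<close>] \<open>n > m\<close> by (metis le_add_diff_inverse less_imp_le order.strict_trans1)
  then show "\<exists>M. \<forall>m\<ge>M. \<forall>n>m. dist (s m) (s n) < e"
    by blast
qed

definition kuratowski_limsup :: "(nat \<Rightarrow> 'a::topological_space set) \<Rightarrow> 'a set" where
  "kuratowski_limsup B = (\<Inter>m. closure (\<Union>k\<in>{m..}. B k))"

lemma closed_kuratowski_limsup: "closed (kuratowski_limsup B)"
  unfolding kuratowski_limsup_def by auto

lemma limit_in_kuratowski_limsup:
  assumes "s \<longlonglongrightarrow> y" "\<And>j. s j \<in> B (m + j)"
  shows "y \<in> kuratowski_limsup B"
  unfolding kuratowski_limsup_def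
proof
  fix m'
  have "s (j + m') \<in> closure (\<Union>k\<in>{m'..}. B k)" for j
    using assms(2)[of "j + m'"] closure_subset by fastforce
  then show "y \<in> closure (\<Union>k\<in>{m'..}. B k)"
    using LIMSEQ_ignore_initial_segment[OF assms(1)] by (rule closed_sequentially[OF closed_closure])
qed

context
  fixes B :: "nat \<Rightarrow> 'a::complete_space set" and a :: "nat \<Rightarrow> real"
  assumes B_compact: "\<And>k. compact (B k)" and B_nonempty: "\<And>k. B k \<noteq> {}"
    and B_step: "\<And>k. hausdist (B k) (B (Suc k)) \<le> a k" and a_summable: "summable a"
begin

lemma hausdist_le_suminf_tail: "hausdist (B m) (B (m + p)) \<le> (\<Sum>i. a (i + m))"
proof (rule chain_le_suminf_tail[where d = "\<lambda>i j. hausdist (B i) (B j)", OF _ _ _ B_step a_summable])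
  show "0 \<le> hausdist (B i) (B j)" "hausdist (B i) (B i) = 0" for i j
    using B_compact B_nonempty by (simp_all add: compact_imp_bounded hausdist_nonneg)
  show "hausdist (B i) (B k) \<le> hausdist (B i) (B j) + hausdist (B j) (B k)" for i j k
    by (simp add: B_compact B_nonempty hausdist_triangle)
qed

lemma exists_hausdist_chain:
  assumes "x \<in> B m"
  obtains s where "s 0 = x" "\<And>j. s j \<in> B (m + j)" "\<And>j. dist (s j) (s (Suc j)) \<le> a (m + j)"
proof -
  have next_point: "\<exists>w. w \<in> B (Suc k) \<and> dist z w \<le> a k" if z: "z \<in> B k" for z k
  proof -
    obtain w where "w \<in> B (Suc k)" "dist z w \<le> hausdist (B k) (B (Suc k))"
      using exists_dist_le_hausdist[OF compact_imp_bounded[OF B_compact] z B_compact B_nonempty] .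
    then show ?thesis
      using B_step[of k] by auto
  qed
  have "\<exists>s. \<forall>j. (s j \<in> B (m + j) \<and> (j = 0 \<longrightarrow> s j = x)) \<and> dist (s j) (s (Suc j)) \<le> a (m + j)"
  proof (rule dependent_nat_choice)
    show "\<exists>z. z \<in> B (m + 0) \<and> (0 = 0 \<longrightarrow> z = x)"
      using assms by simp
    show "\<exists>w. (w \<in> B (m + Suc j) \<and> (Suc j = 0 \<longrightarrow> w = x)) \<and> dist z w \<le> a (m + j)"
      if "z \<in> B (m + j) \<and> (j = 0 \<longrightarrow> z = x)" for z j
      using next_point[of z "m + j"] that by simp
  qed
  then show ?thesis
    using that by blast
qed

lemma exists_near_kuratowski_limsup:
  assumes "x \<in> B m"
  obtains y where "y \<in> kuratowski_limsup B" "dist x y \<le> (\<Sum>i. a (i + m))"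
proof -
  obtain s where s0: "s 0 = x" and s: "\<And>j. s j \<in> B (m + j)"
    and s_step: "\<And>j. dist (s j) (s (Suc j)) \<le> a (m + j)"
    using exists_hausdist_chain[OF assms] by blast
  have summable: "summable (\<lambda>j. a (m + j))"
    using summable_ignore_initial_segment[OF a_summable, of m] by (simp add: add.commute)
  obtain y where y: "s \<longlonglongrightarrow> y"
    using Cauchy_if_summable_dist_Suc[OF s_step summable] Cauchy_convergent_iff convergent_def by blast
  have "dist (s 0) (s p) \<le> (\<Sum>i. a (i + m))" for p
    using chain_le_suminf_tail[OF zero_le_dist dist_self dist_triangle s_step summable, of 0 p]
    by (simp add: add.commute)
  then have "dist x y \<le> (\<Sum>i. a (i + m))"
    unfolding s0[symmetric] by (intro LIMSEQ_le_const2[OF tendsto_dist[OF tendsto_const y]]) auto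
  moreover have "y \<in> kuratowski_limsup B"
    using y s by (rule limit_in_kuratowski_limsup)
  ultimately show ?thesis
    using that by blast
qed

lemma infdist_kuratowski_limsup_le:
  assumes "y \<in> kuratowski_limsup B"
  shows "infdist y (B m) \<le> (\<Sum>i. a (i + m))"
proof (rule field_le_epsilon)
  fix e :: real assume "e > 0"
  have "y \<in> closure (\<Union>k\<in>{m..}. B k)"
    using assms unfolding kuratowski_limsup_def by blast
  then obtain z where "z \<in> (\<Union>k\<in>{m..}. B k)" "dist z y < e"
    using \<open>e > 0\<close> unfolding closure_approachable by blast
  then obtain k where "k \<ge> m" "z \<in> B k"
    by auto
  have "infdist z (B m) \<le> hausdist (B (m + (k - m))) (B m)"
    using \<open>z \<in> B k\<close> \<open>k \<ge> m\<close> B_compact by (simp add: compact_imp_bounded infdist_le_hausdist)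
  also have "\<dots> \<le> (\<Sum>i. a (i + m))"
    using hausdist_le_suminf_tail by (simp add: hausdist_sym)
  finally show "infdist y (B m) \<le> (\<Sum>i. a (i + m)) + e"
    using infdist_triangle[of y "B m" z] \<open>dist z y < e\<close> by (simp add: dist_commute)
qed

lemma kuratowski_limsup_nonempty: "kuratowski_limsup B \<noteq> {}"
proof -
  obtain x where "x \<in> B 0"
    using B_nonempty by blast
  then obtain y where "y \<in> kuratowski_limsup B"
    by (rule exists_near_kuratowski_limsup)
  then show ?thesis
    by blast
qed

lemma compact_kuratowski_limsup: "compact (kuratowski_limsup B)"
  unfolding compact_eq_totally_bounded
proof (intro conjI allI impI)
  show "complete (kuratowski_limsup B)"
    using closed_kuratowski_limsup complete_eq_closed by blast
  fix e :: real assume "e > 0"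
  then have "e / 2 > 0"
    by simp
  then obtain m where m: "(\<Sum>i. a (i + m)) < e / 2"
    using eventually_happens'[OF sequentially_bot order_tendstoD(2)[OF suminf_exist_split2[OF a_summable]]]
    by blast
  obtain K where K: "finite K" "B m \<subseteq> (\<Union>c\<in>K. ball c (e / 2))"
    using B_compact[of m] \<open>e / 2 > 0\<close> unfolding compact_eq_totally_bounded by meson
  have "y \<in> (\<Union>c\<in>K. ball c e)" if "y \<in> kuratowski_limsup B" for y
  proof -
    obtain z where "z \<in> B m" "infdist y (B m) = dist y z"
      using infdist_attains_inf_compact[OF B_compact B_nonempty] .
    moreover obtain c where "c \<in> K" "dist c z < e / 2"
      using K calculation(1) by auto
    ultimately have "dist c y < e"
      using infdist_kuratowski_limsup_le[OF that, of m] m dist_triangle[of c y z]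
      by (simp add: dist_commute)
    with \<open>c \<in> K\<close> show ?thesis
      by auto
  qed
  then show "\<exists>K. finite K \<and> kuratowski_limsup B \<subseteq> (\<Union>c\<in>K. ball c e)"
    using K(1) by blast
qed

lemma hausdist_kuratowski_limsup_le: "hausdist (B m) (kuratowski_limsup B) \<le> (\<Sum>i. a (i + m))"
proof (rule hausdist_le[OF B_nonempty kuratowski_limsup_nonempty])
  fix x assume "x \<in> B m"
  then obtain y where "y \<in> kuratowski_limsup B" "dist x y \<le> (\<Sum>i. a (i + m))"
    by (rule exists_near_kuratowski_limsup)
  then show "infdist x (kuratowski_limsup B) \<le> (\<Sum>i. a (i + m))"
    using infdist_le order_trans by blast
qed (rule infdist_kuratowski_limsup_le)

theorem hausdist_tendsto_kuratowski_limsup: "(\<lambda>m. hausdist (B m) (kuratowski_limsup B)) \<longlonglongrightarrow> 0"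
proof (rule tendsto_sandwich[OF _ _ tendsto_const suminf_exist_split2[OF a_summable]])
  show "\<forall>\<^sub>F m in sequentially. 0 \<le> hausdist (B m) (kuratowski_limsup B)"
    using B_compact B_nonempty by (simp add: compact_imp_bounded hausdist_nonneg)
qed (simp add: hausdist_kuratowski_limsup_le)

end

subsection \<open>Backward compositions of contracting set maps\<close>

locale hausdorff_contractions =
  fixes F :: "nat \<Rightarrow> 'a::metric_space set \<Rightarrow> 'a set" and \<Phi> :: "nat \<Rightarrow> real \<Rightarrow> real"
  assumes compact_image: "\<And>i A. i \<ge> 1 \<Longrightarrow> compact A \<Longrightarrow> A \<noteq> {} \<Longrightarrow> compact (F i A)"
    and nonempty_image: "\<And>i A. i \<ge> 1 \<Longrightarrow> compact A \<Longrightarrow> A \<noteq> {} \<Longrightarrow> F i A \<noteq> {}"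
    and Phi_nonneg: "\<And>i t. i \<ge> 1 \<Longrightarrow> 0 \<le> t \<Longrightarrow> 0 \<le> \<Phi> i t"
    and Phi_mono: "\<And>i s t. i \<ge> 1 \<Longrightarrow> 0 \<le> s \<Longrightarrow> s \<le> t \<Longrightarrow> \<Phi> i s \<le> \<Phi> i t"
    and hausdist_image_le: "\<And>i A B. i \<ge> 1 \<Longrightarrow> compact A \<Longrightarrow> A \<noteq> {} \<Longrightarrow> compact B \<Longrightarrow> B \<noteq> {}
      \<Longrightarrow> hausdist (F i A) (F i B) \<le> \<Phi> i (hausdist A B)"
begin

lemma lcomp_Phi_nonneg: "0 \<le> t \<Longrightarrow> 0 \<le> lcomp \<Phi> k t"
  by (induction k arbitrary: t) (simp_all add: Phi_nonneg)

lemma lcomp_Phi_mono: "0 \<le> s \<Longrightarrow> s \<le> t \<Longrightarrow> lcomp \<Phi> k s \<le> lcomp \<Phi> k t"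
proof (induction k arbitrary: s t)
  case (Suc k)
  then show ?case
    by (simp add: Phi_mono Phi_nonneg)
qed simp

lemma compact_nonempty_lcomp:
  assumes "compact A" "A \<noteq> {}"
  shows "compact (lcomp F k A) \<and> lcomp F k A \<noteq> {}"
  using assms by (induction k arbitrary: A) (simp_all add: compact_image nonempty_image)

lemma hausdist_lcomp_le:
  assumes "compact A" "A \<noteq> {}" "compact B" "B \<noteq> {}"
  shows "hausdist (lcomp F k A) (lcomp F k B) \<le> lcomp \<Phi> k (hausdist A B)"
  using assms
proof (induction k arbitrary: A B)
  case (Suc k)
  let ?A = "F (Suc k) A" and ?B = "F (Suc k) B"
  have images: "compact ?A" "?A \<noteq> {}" "compact ?B" "?B \<noteq> {}"
    using Suc.prems by (simp_all add: compact_image nonempty_image)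
  have "hausdist (lcomp F (Suc k) A) (lcomp F (Suc k) B) \<le> lcomp \<Phi> k (hausdist ?A ?B)"
    using Suc.IH[OF images] by simp
  also have "\<dots> \<le> lcomp \<Phi> k (\<Phi> (Suc k) (hausdist A B))"
    using images Suc.prems
    by (intro lcomp_Phi_mono hausdist_image_le) (simp_all add: compact_imp_bounded hausdist_nonneg)
  finally show ?case
    by simp
qed simp

lemma hausdist_lcomp_Suc_le:
  assumes "compact A" "A \<noteq> {}" "hausdist (F (Suc k) A) A \<le> M"
  shows "hausdist (lcomp F k A) (lcomp F (Suc k) A) \<le> lcomp \<Phi> k M"
proof -
  have image: "compact (F (Suc k) A)" "F (Suc k) A \<noteq> {}"
    using assms by (simp_all add: compact_image nonempty_image)
  have "hausdist (lcomp F k A) (lcomp F (Suc k) A) = hausdist (lcomp F k (F (Suc k) A)) (lcomp F k A)"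
    by (simp add: hausdist_sym[of "lcomp F k A"])
  also have "\<dots> \<le> lcomp \<Phi> k (hausdist (F (Suc k) A) A)"
    using image assms by (intro hausdist_lcomp_le)
  also have "\<dots> \<le> lcomp \<Phi> k M"
    using image assms by (intro lcomp_Phi_mono) (simp_all add: compact_imp_bounded hausdist_nonneg)
  finally show ?thesis .
qed

context
  assumes summable: "\<And>t. t > 0 \<Longrightarrow> summable (\<lambda>k. lcomp \<Phi> (Suc k) t)"
begin

lemma lcomp_Phi_tendsto_0:
  assumes "0 \<le> t"
  shows "(\<lambda>k. lcomp \<Phi> k t) \<longlonglongrightarrow> 0"
proof (rule tendsto_sandwich[OF _ _ tendsto_const])
  have "(\<lambda>k. lcomp \<Phi> (Suc k) (max t 1)) \<longlonglongrightarrow> 0"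
    using summable by (intro summable_LIMSEQ_zero) simp
  then show "(\<lambda>k. lcomp \<Phi> k (max t 1)) \<longlonglongrightarrow> 0"
    by (rule LIMSEQ_imp_Suc)
  show "\<forall>\<^sub>F k in sequentially. 0 \<le> lcomp \<Phi> k t"
    using assms by (intro always_eventually allI lcomp_Phi_nonneg)
  show "\<forall>\<^sub>F k in sequentially. lcomp \<Phi> k t \<le> lcomp \<Phi> k (max t 1)"
    using assms by (intro always_eventually allI lcomp_Phi_mono) simp_all
qed

lemma hausdist_lcomp_tendsto_0:
  assumes "compact A" "A \<noteq> {}" "compact B" "B \<noteq> {}"
  shows "(\<lambda>k. hausdist (lcomp F k A) (lcomp F k B)) \<longlonglongrightarrow> 0"
proof (rule tendsto_sandwich[OF _ _ tendsto_const lcomp_Phi_tendsto_0])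
  show "\<forall>\<^sub>F k in sequentially. 0 \<le> hausdist (lcomp F k A) (lcomp F k B)"
    using compact_nonempty_lcomp[OF assms(1,2)] by (simp add: compact_imp_bounded hausdist_nonneg)
  show "\<forall>\<^sub>F k in sequentially. hausdist (lcomp F k A) (lcomp F k B) \<le> lcomp \<Phi> k (hausdist A B)"
    using assms by (simp add: hausdist_lcomp_le)
  show "0 \<le> hausdist A B"
    using assms by (simp add: compact_imp_bounded hausdist_nonneg)
qed

end

end

theorem backward_trajectories_converge:
  fixes F :: "nat \<Rightarrow> 'a::complete_space set \<Rightarrow> 'a set"
  assumes "hausdorff_contractions F \<Phi>" and A1: "compact A1" "A1 \<noteq> {}"
    and bdd: "bdd_above ((\<lambda>i. hausdist (F i A1) A1) ` {1..})"
    and summable: "\<And>t. t > 0 \<Longrightarrow> summable (\<lambda>k. lcomp \<Phi> (Suc k) t)"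
  shows "\<exists>!S. compact S \<and> S \<noteq> {} \<and>
           (\<forall>A. compact A \<and> A \<noteq> {} \<longrightarrow> (\<lambda>k. hausdist (lcomp F k A) S) \<longlonglongrightarrow> 0)"
proof -
  interpret hausdorff_contractions F \<Phi> by fact
  obtain M0 where M0: "\<And>i. i \<ge> 1 \<Longrightarrow> hausdist (F i A1) A1 \<le> M0"
    using bdd unfolding bdd_above_def by auto
  define M where "M = max M0 1"
  define B where "B k = lcomp F k A1" for k
  have B: "compact (B k)" "B k \<noteq> {}" for k
    unfolding B_def using compact_nonempty_lcomp[OF A1] by simp_all
  have step: "hausdist (B k) (B (Suc k)) \<le> lcomp \<Phi> k M" for k
    unfolding B_def by (rule hausdist_lcomp_Suc_le[OF A1]) (use M0[of "Suc k"] in \<open>simp add: M_def\<close>)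
  have summable_M: "summable (\<lambda>k. lcomp \<Phi> k M)"
    unfolding summable_Suc_iff[of "\<lambda>k. lcomp \<Phi> k M", symmetric] using summable[of M] by (simp add: M_def)
  define S where "S = kuratowski_limsup B"
  have S: "compact S" "S \<noteq> {}" "(\<lambda>k. hausdist (B k) S) \<longlonglongrightarrow> 0"
    unfolding S_def using B step summable_M
    by (rule compact_kuratowski_limsup kuratowski_limsup_nonempty hausdist_tendsto_kuratowski_limsup)+
  have attracts: "(\<lambda>k. hausdist (lcomp F k A) S) \<longlonglongrightarrow> 0" if A: "compact A" "A \<noteq> {}" for A
  proof (rule hausdist_tendsto_0_trans[OF _ _ B S(1,2) _ S(3)])
    show "compact (lcomp F k A)" "lcomp F k A \<noteq> {}" for k
      using compact_nonempty_lcomp[OF A] by simp_all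
    show "(\<lambda>k. hausdist (lcomp F k A) (B k)) \<longlonglongrightarrow> 0"
      unfolding B_def using hausdist_lcomp_tendsto_0[OF summable A A1] .
  qed
  show ?thesis
  proof (rule ex1I[where a = S])
    show "compact S \<and> S \<noteq> {} \<and> (\<forall>A. compact A \<and> A \<noteq> {} \<longrightarrow> (\<lambda>k. hausdist (lcomp F k A) S) \<longlonglongrightarrow> 0)"
      using S(1,2) attracts by simp
  next
    fix T assume "compact T \<and> T \<noteq> {} \<and> (\<forall>A. compact A \<and> A \<noteq> {} \<longrightarrow> (\<lambda>k. hausdist (lcomp F k A) T) \<longlonglongrightarrow> 0)"
    then have T: "compact T" "T \<noteq> {}" and "(\<lambda>k. hausdist (lcomp F k A1) T) \<longlonglongrightarrow> 0"
      using A1 by simp_all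
    then have "(\<lambda>k. hausdist (B k) T) \<longlonglongrightarrow> 0"
      by (simp add: B_def)
    with S show "T = S"
      using hausdist_limit_unique[OF B T] by simp
  qed
qed

subsection \<open>Iterated function systems\<close>

lemma maxphi_ge: "r \<in> {1..n} \<Longrightarrow> \<phi> r i t \<le> maxphi n \<phi> i t"
  unfolding maxphi_def by (intro Max_ge) auto

lemma maxphi_le:
  assumes "n \<ge> 1" "\<And>r. r \<in> {1..n} \<Longrightarrow> \<phi> r i t \<le> c"
  shows "maxphi n \<phi> i t \<le> c"
  unfolding maxphi_def using assms by (intro Max.boundedI) auto

lemma compact_hutch:
  assumes "\<And>r. r \<in> {1..n} \<Longrightarrow> continuous_on UNIV (f r i)" "compact A"
  shows "compact (hutch n f i A)"
  unfolding hutch_def using assms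
  by (intro compact_UN compact_continuous_image) (auto intro: continuous_on_subset)

lemma hausdist_hutch_le:
  fixes f :: "nat \<Rightarrow> nat \<Rightarrow> 'a::metric_space \<Rightarrow> 'a"
  assumes "n \<ge> 1"
    and contr: "\<And>r. r \<in> {1..n} \<Longrightarrow> phi_contraction (\<phi> r i) (f r i)"
    and mono: "\<And>r. r \<in> {1..n} \<Longrightarrow> mono_on {0..} (\<phi> r i)"
    and "compact A" "A \<noteq> {}" "compact B" "B \<noteq> {}"
  shows "hausdist (hutch n f i A) (hutch n f i B) \<le> maxphi n \<phi> i (hausdist A B)"
proof -
  have one_side: "infdist x (hutch n f i Y) \<le> maxphi n \<phi> i (hausdist X Y)"
    if X: "compact X" and Y: "compact Y" "Y \<noteq> {}" and x: "x \<in> hutch n f i X"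
    for X Y :: "'a set" and x
  proof -
    obtain r a where r: "r \<in> {1..n}" "a \<in> X" "x = f r i a"
      using x unfolding hutch_def by auto
    obtain b where "b \<in> Y" "dist a b \<le> hausdist X Y"
      using exists_dist_le_hausdist[OF compact_imp_bounded[OF X] r(2) Y] .
    moreover have "f r i b \<in> hutch n f i Y"
      using r(1) \<open>b \<in> Y\<close> unfolding hutch_def by auto
    ultimately have "infdist x (hutch n f i Y) \<le> dist (f r i a) (f r i b)"
      unfolding r(3) by (simp add: infdist_le)
    also have "\<dots> \<le> \<phi> r i (dist a b)"
      using contr[OF r(1)] unfolding phi_contraction_def by blast
    also have "\<dots> \<le> \<phi> r i (hausdist X Y)"
      using mono_onD[OF mono[OF r(1)], of "dist a b" "hausdist X Y"] zero_le_dist[of a b]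
        \<open>dist a b \<le> hausdist X Y\<close> by simp
    also have "\<dots> \<le> maxphi n \<phi> i (hausdist X Y)"
      using r(1) by (rule maxphi_ge)
    finally show ?thesis .
  qed
  show ?thesis
  proof (rule hausdist_le)
    show "hutch n f i A \<noteq> {}" "hutch n f i B \<noteq> {}"
      using assms unfolding hutch_def by auto
    show "infdist x (hutch n f i B) \<le> maxphi n \<phi> i (hausdist A B)" if "x \<in> hutch n f i A" for x
      using one_side[OF assms(4,6,7) that] .
    show "infdist y (hutch n f i A) \<le> maxphi n \<phi> i (hausdist A B)" if "y \<in> hutch n f i B" for y
      using one_side[OF assms(6,4,5) that] by (simp add: hausdist_sym)
  qed
qed

lemma hausdorff_contractions_hutch:
  fixes f :: "nat \<Rightarrow> nat \<Rightarrow> 'a::metric_space \<Rightarrow> 'a"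
  assumes "n \<ge> 1"
    and cont: "\<And>r i. r \<in> {1..n} \<Longrightarrow> i \<ge> 1 \<Longrightarrow> continuous_on UNIV (f r i)"
    and comp: "\<And>r i. r \<in> {1..n} \<Longrightarrow> i \<ge> 1 \<Longrightarrow> comparison_function (\<phi> r i)"
    and contr: "\<And>r i. r \<in> {1..n} \<Longrightarrow> i \<ge> 1 \<Longrightarrow> phi_contraction (\<phi> r i) (f r i)"
  shows "hausdorff_contractions (hutch n f) (maxphi n \<phi>)"
proof
  have nonneg: "0 \<le> \<phi> r i t" if "r \<in> {1..n}" "i \<ge> 1" "0 \<le> t" for r i t
    using comp[OF that(1,2)] that(3) unfolding comparison_function_def by auto
  have mono: "mono_on {0..} (\<phi> r i)" if "r \<in> {1..n}" "i \<ge> 1" for r i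
    using comp[OF that] unfolding comparison_function_def by auto
  fix i :: nat assume "i \<ge> 1"
  show "0 \<le> maxphi n \<phi> i t" if "0 \<le> t" for t
    using nonneg[of 1 i t] maxphi_ge[of 1 n \<phi> i t] \<open>i \<ge> 1\<close> \<open>n \<ge> 1\<close> that by simp
  show "maxphi n \<phi> i s \<le> maxphi n \<phi> i t" if "0 \<le> s" "s \<le> t" for s t
  proof (rule maxphi_le[OF \<open>n \<ge> 1\<close>])
    fix r assume r: "r \<in> {1..n}"
    then have "\<phi> r i s \<le> \<phi> r i t"
      using mono[OF r \<open>i \<ge> 1\<close>] that by (simp add: mono_on_def)
    also have "\<dots> \<le> maxphi n \<phi> i t"
      using r by (rule maxphi_ge)
    finally show "\<phi> r i s \<le> maxphi n \<phi> i t" .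
  qed
  fix A B :: "'a set"
  show "compact A \<Longrightarrow> compact (hutch n f i A)"
    using cont \<open>i \<ge> 1\<close> by (intro compact_hutch) auto
  show "A \<noteq> {} \<Longrightarrow> hutch n f i A \<noteq> {}"
    using \<open>n \<ge> 1\<close> unfolding hutch_def by auto
  show "compact A \<Longrightarrow> A \<noteq> {} \<Longrightarrow> compact B \<Longrightarrow> B \<noteq> {} \<Longrightarrow>
      hausdist (hutch n f i A) (hutch n f i B) \<le> maxphi n \<phi> i (hausdist A B)"
    using \<open>i \<ge> 1\<close> \<open>n \<ge> 1\<close> contr mono by (intro hausdist_hutch_le) auto
qed

theorem corollary4p4:
  fixes f :: "nat \<Rightarrow> nat \<Rightarrow> 'a::complete_space \<Rightarrow> 'a"
    and \<phi> :: "nat \<Rightarrow> nat \<Rightarrow> real \<Rightarrow> real"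
    and n :: nat and A1 :: "'a set"
  assumes n: "n \<ge> 1"
    and cont: "\<And>r i. r \<in> {1..n} \<Longrightarrow> i \<ge> 1 \<Longrightarrow> continuous_on UNIV (f r i)"
    and comp: "\<And>r i. r \<in> {1..n} \<Longrightarrow> i \<ge> 1 \<Longrightarrow> comparison_function (\<phi> r i)"
    and contr: "\<And>r i. r \<in> {1..n} \<Longrightarrow> i \<ge> 1 \<Longrightarrow> phi_contraction (\<phi> r i) (f r i)"
    and A1: "compact A1" "A1 \<noteq> {}"
    and bdd: "bdd_above ((\<lambda>i. hausdist (hutch n f i A1) A1) ` {1..})"
    and summ: "\<And>t. t > 0 \<Longrightarrow> summable (\<lambda>k. lcomp (maxphi n \<phi>) (Suc k) t)"
  shows "\<exists>!Astar. compact Astar \<and> Astar \<noteq> {} \<and>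
           (\<forall>A. compact A \<and> A \<noteq> {} \<longrightarrow>
              (\<lambda>k. hausdist (lcomp (hutch n f) k A) Astar) \<longlonglongrightarrow> 0)"
  using hausdorff_contractions_hutch[OF n cont comp contr] A1 bdd summ
  by (rule backward_trajectories_converge)

end
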